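(* Let $c_1,\dots,c_l\in\mathbb{R}[z_1,\dots,z_m]$ with $l\ge m$ be the constraint polynomials of a framework (as described in the context), let $\mathbf{R}(z)$ be its $m\times l$ rigidity matrix with entries $\mathbf{R}(z)_{ij}=\partial c_j/\partial z_i$, let $p_1,\dots,p_\mu$ ($\mu=\binom{l}{l-m}$) be all $m\times m$ minors of $\mathbf{R}(z)$, and let $V_1\subset\mathbb{R}^m$ be the shakiness variety, i.e. the common zero set of $p_1,\dots,p_\mu$. Assume $V_1\neq\mathbb{R}^m$. If $X$ is a regular point of $V_1$, then $\operatorname{rk}\mathbf{R}(X)=m-1$; equivalently, at $X$ there is, up to a nonzero scalar factor, exactly one non-trivial infinitesimal (instantaneous) flex, i.e. the space of vectors $v\in\mathbb{R}^m$ with $\nabla c_j(X)\cdot v=0$ for all $j=1,\dots,l$ is one-dimensional.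
   Context: A planar (resp. spatial) bar-joint framework with $w$ joints $X_1,\dots,X_w$ and $e$ bars of prescribed non-zero lengths is described algebraically by unknowns $z_1,\dots,z_m$ (the joint coordinates, $m=2w$ resp. $m=3w$) and $l$ polynomial equations $c_1=\dots=c_l=0$: one quadratic equation per bar (squared distance of its endpoints equals the squared bar length), or a linear equation when a joint is an ideal point, together with 3 (resp. 6) linear equations eliminating the Euclidean isometries (so $l=e+3$ resp. $l=e+6$). Each hypersurface $c_j=0$ is a hyperplane or a regular hyperquadric. Because isometries are eliminated by the linear constraints, every nonzero vector $v$ with $\nabla c_j(X)\cdot v=0$ for all $j$ is a non-trivial infinitesimal flex at the configuration $X$. A point $X\in V_1$ is called regular if the Jacobian matrix of $(p_1,\dots,p_\mu)$ at $X$ has rank equal to $m-\dim_X V_1$ (Jacobian criterion). *)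

theory Defs
  imports "HOL-Analysis.Analysis"
begin

inductive_set poly_fun :: "(real^'m \<Rightarrow> real) set" where
  const: "(\<lambda>z. a) \<in> poly_fun"
| coord: "(\<lambda>z. z $ i) \<in> poly_fun"
| add: "f \<in> poly_fun \<Longrightarrow> g \<in> poly_fun \<Longrightarrow> (\<lambda>z. f z + g z) \<in> poly_fun"
| mult: "f \<in> poly_fun \<Longrightarrow> g \<in> poly_fun \<Longrightarrow> (\<lambda>z. f z * g z) \<in> poly_fun"

definition partial_deriv :: "(real^'m \<Rightarrow> real) \<Rightarrow> 'm \<Rightarrow> real^'m \<Rightarrow> real" where
  "partial_deriv f i z = deriv (\<lambda>t. f (z + t *\<^sub>R axis i 1)) 0"

definition grad :: "(real^'m \<Rightarrow> real) \<Rightarrow> real^'m \<Rightarrow> real^'m" where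
  "grad f z = (\<chi> i. partial_deriv f i z)"

definition rigidity_matrix :: "nat \<Rightarrow> (nat \<Rightarrow> real^'m \<Rightarrow> real) \<Rightarrow> real^'m \<Rightarrow> 'm \<Rightarrow> nat \<Rightarrow> real" where
  "rigidity_matrix l c z i j = partial_deriv (c j) i z"

definition rigidity_rank :: "nat \<Rightarrow> (nat \<Rightarrow> real^'m \<Rightarrow> real) \<Rightarrow> real^'m \<Rightarrow> nat" where
  "rigidity_rank l c z = dim (span {(\<chi> i. rigidity_matrix l c z i j) | j. j < l})"

text \<open>The m x m minors of R(z): determinants of the submatrices formed by m distinct columns
  (all column choices and orderings; this lists each minor p_1..p_mu up to sign and repetition).\<close>
definition maximal_minors :: "nat \<Rightarrow> (nat \<Rightarrow> real^'m \<Rightarrow> real) \<Rightarrow> (real^'m \<Rightarrow> real) set" where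
  "maximal_minors l c =
     {(\<lambda>z. det (\<chi> i k. rigidity_matrix l c z i (col k))) | col :: 'm \<Rightarrow> nat. inj col \<and> (\<forall>k. col k < l)}"

definition shakiness_variety :: "nat \<Rightarrow> (nat \<Rightarrow> real^'m \<Rightarrow> real) \<Rightarrow> (real^'m) set" where
  "shakiness_variety l c = {z. \<forall>p \<in> maximal_minors l c. p z = 0}"

definition set_dim :: "(real^'m) set \<Rightarrow> nat" where
  "set_dim S = Max {d. \<exists>(T::(real^'m) set) U W. subspace T \<and> dim T = d \<and> U \<noteq> {} \<and>
                        openin (top_of_set T) U \<and> W \<subseteq> S \<and> U homeomorphic W}"

definition local_dim :: "(real^'m) set \<Rightarrow> real^'m \<Rightarrow> nat" where
  "local_dim V X = (LEAST d. \<exists>e>0. set_dim (V \<inter> ball X e) = d)"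

text \<open>Regular point (Jacobian criterion): the Jacobian of the polynomials P at X has
  rank m - dim_X V.\<close>
definition regular_point :: "(real^'m) set \<Rightarrow> (real^'m \<Rightarrow> real) set \<Rightarrow> real^'m \<Rightarrow> bool" where
  "regular_point V P X \<longleftrightarrow> X \<in> V \<and>
     dim (span {grad p X | p. p \<in> P}) = CARD('m) - local_dim V X"

end

theory Submission
  imports Defs "HOL-Computational_Algebra.Polynomial"
begin

text \<open>At a point X of the shakiness variety every maximal minor of R(X) vanishes, so
  rk R(X) \<le> m - 1. If rk R(X) \<le> m - 2, differentiating a minor row by row (Jacobi's formula)
  gives a sum of determinants of R(X)-submatrices with one row replaced, all singular, so every
  minor has zero gradient at X. Regularity then forces dim_X V_1 = m, so by invariance of domain
  V_1 contains a ball; the minors are polynomials vanishing on a ball, hence identically, and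
  V_1 = R^m. The flex space is the orthogonal complement of the column space of R(X), so its
  dimension is m - rk R(X) = 1.\<close>

section \<open>Polynomial functions\<close>

lemma poly_fun_sum:
  assumes "finite A" "\<And>a. a \<in> A \<Longrightarrow> f a \<in> poly_fun"
  shows "(\<lambda>z. \<Sum>a\<in>A. f a z) \<in> poly_fun"
  using assms by (induction A rule: finite_induct) (auto intro: poly_fun.intros)

lemma poly_fun_prod:
  assumes "finite A" "\<And>a. a \<in> A \<Longrightarrow> f a \<in> poly_fun"
  shows "(\<lambda>z. \<Prod>a\<in>A. f a z) \<in> poly_fun"
  using assms by (induction A rule: finite_induct) (auto intro: poly_fun.intros)

lemma poly_fun_det:
  fixes M :: "'n::finite \<Rightarrow> 'n \<Rightarrow> real^'m \<Rightarrow> real"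
  assumes "\<And>i k. M i k \<in> poly_fun"
  shows "(\<lambda>z. det (\<chi> i k. M i k z)) \<in> poly_fun"
  unfolding det_def
  by (auto intro!: poly_fun_sum poly_fun_prod poly_fun.mult poly_fun.const assms
      simp: finite_permutations)

lemma poly_fun_has_directional_derivative:
  assumes "f \<in> poly_fun"
  shows "\<exists>f'\<in>poly_fun. \<forall>z. ((\<lambda>t. f (z + t *\<^sub>R w)) has_real_derivative f' z) (at 0)"
  using assms
proof induction
  case (const a)
  show ?case by (auto intro!: bexI[of _ "\<lambda>z. 0"] poly_fun.const)
next
  case (coord i)
  show ?case by (auto intro!: bexI[of _ "\<lambda>z. w $ i"] poly_fun.const derivative_eq_intros)
next
  case (add f g)
  then obtain f' g' where "f' \<in> poly_fun" "g' \<in> poly_fun"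
    "\<And>z. ((\<lambda>t. f (z + t *\<^sub>R w)) has_real_derivative f' z) (at 0)"
    "\<And>z. ((\<lambda>t. g (z + t *\<^sub>R w)) has_real_derivative g' z) (at 0)"
    by blast
  then show ?case by (auto intro!: bexI[of _ "\<lambda>z. f' z + g' z"] poly_fun.add DERIV_add)
next
  case (mult f g)
  then obtain f' g' where "f' \<in> poly_fun" "g' \<in> poly_fun"
    "\<And>z. ((\<lambda>t. f (z + t *\<^sub>R w)) has_real_derivative f' z) (at 0)"
    "\<And>z. ((\<lambda>t. g (z + t *\<^sub>R w)) has_real_derivative g' z) (at 0)"
    by blast
  with mult.hyps show ?case
    by (auto intro!: bexI[of _ "\<lambda>z. f' z * g z + f z * g' z"] poly_fun.add poly_fun.mult
        derivative_eq_intros)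
qed

lemma poly_fun_partial_deriv:
  assumes "f \<in> poly_fun"
  shows "partial_deriv f i \<in> poly_fun"
    and "((\<lambda>t. f (z + t *\<^sub>R axis i 1)) has_real_derivative partial_deriv f i z) (at 0)"
proof -
  obtain f' where f': "f' \<in> poly_fun"
    "\<And>z. ((\<lambda>t. f (z + t *\<^sub>R axis i 1)) has_real_derivative f' z) (at 0)"
    using poly_fun_has_directional_derivative[OF assms] by blast
  then have "partial_deriv f i = f'"
    by (auto simp: partial_deriv_def fun_eq_iff intro: DERIV_imp_deriv)
  with f' show "partial_deriv f i \<in> poly_fun"
    and "((\<lambda>t. f (z + t *\<^sub>R axis i 1)) has_real_derivative partial_deriv f i z) (at 0)"
    by simp_all
qed

lemma poly_fun_on_line:
  assumes "f \<in> poly_fun"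
  shows "\<exists>q. \<forall>t. f (a + t *\<^sub>R w) = poly q t"
  using assms
proof induction
  case (const b)
  show ?case by (intro exI[of _ "[:b:]"]) simp
next
  case (coord i)
  show ?case by (intro exI[of _ "[:a $ i, w $ i:]"]) (simp add: algebra_simps)
next
  case (add f g)
  then obtain p q where "\<forall>t. f (a + t *\<^sub>R w) = poly p t" "\<forall>t. g (a + t *\<^sub>R w) = poly q t"
    by blast
  then show ?case by (intro exI[of _ "p + q"]) simp
next
  case (mult f g)
  then obtain p q where "\<forall>t. f (a + t *\<^sub>R w) = poly p t" "\<forall>t. g (a + t *\<^sub>R w) = poly q t"
    by blast
  then show ?case by (intro exI[of _ "p * q"]) simp
qed

lemma poly_fun_eq_0_if_eq_0_on_ball:
  assumes "f \<in> poly_fun" "r > 0" "\<And>y. y \<in> ball a r \<Longrightarrow> f y = 0"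
  shows "f z = 0"
proof -
  obtain q where q: "\<And>t. f (a + t *\<^sub>R (z - a)) = poly q t"
    using poly_fun_on_line[OF assms(1)] by blast
  define d where "d = r / (norm (z - a) + 1)"
  have "d > 0" using assms(2) by (simp add: d_def add_nonneg_pos)
  have "poly q t = 0" if t: "t \<in> {0..<d}" for t
  proof -
    have "norm (t *\<^sub>R (z - a)) \<le> t * (norm (z - a) + 1)"
      using t by (simp add: abs_of_nonneg distrib_left)
    also have "\<dots> < r"
      using t by (simp add: d_def less_divide_eq add_nonneg_pos)
    finally show ?thesis using assms(3)[of "a + t *\<^sub>R (z - a)"] q by (simp add: dist_norm)
  qed
  then have "q = 0"
    using poly_roots_finite[of q] infinite_Ico[OF \<open>d > 0\<close>] by (meson finite_subset subsetI mem_Collect_eq)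
  then show ?thesis using q[of 1] by simp
qed

section \<open>Derivative of a determinant\<close>

lemma det_replace_row:
  fixes A :: "'a::comm_ring_1^'n^'n"
  shows "det (\<chi> r. if r = i then v else A $ r) =
    (\<Sum>p | p permutes UNIV. of_int (sign p) * (v $ p i * (\<Prod>j\<in>UNIV - {i}. A $ j $ p j)))"
proof -
  have "(\<Prod>j\<in>UNIV. (\<chi> r. if r = i then v else A $ r) $ j $ p j) =
      v $ p i * (\<Prod>j\<in>UNIV - {i}. A $ j $ p j)" for p
    by (subst prod.remove[of _ i]) (auto intro!: prod.cong)
  then show ?thesis unfolding det_def by simp
qed

lemma has_real_derivative_det:
  fixes F :: "real \<Rightarrow> real^'n^'n"
  assumes "\<And>i k. ((\<lambda>t. F t $ i $ k) has_real_derivative F' $ i $ k) (at x)"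
  shows "((\<lambda>t. det (F t)) has_real_derivative
           (\<Sum>i\<in>UNIV. det (\<chi> r. if r = i then F' $ i else F x $ r))) (at x)"
proof -
  define P where "P = {p. p permutes (UNIV :: 'n set)}"
  have "((\<lambda>t. \<Sum>p\<in>P. of_int (sign p) * (\<Prod>i\<in>UNIV. F t $ i $ p i)) has_real_derivative
      (\<Sum>p\<in>P. of_int (sign p) * (\<Sum>i\<in>UNIV. F' $ i $ p i * (\<Prod>j\<in>UNIV - {i}. F x $ j $ p j))))
      (at x)"
    by (intro DERIV_sum DERIV_cmult has_field_derivative_prod assms)
  also have "(\<Sum>p\<in>P. of_int (sign p) * (\<Sum>i\<in>UNIV. F' $ i $ p i * (\<Prod>j\<in>UNIV - {i}. F x $ j $ p j)))
      = (\<Sum>i\<in>UNIV. det (\<chi> r. if r = i then F' $ i else F x $ r))"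
    unfolding det_replace_row P_def sum_distrib_left by (rule sum.swap)
  finally show ?thesis unfolding det_def P_def .
qed

lemma det_replace_row_eq_0:
  fixes A :: "real^'n^'n"
  assumes "rank A + 2 \<le> CARD('n)"
  shows "det (\<chi> r. if r = i then v else A $ r) = 0"
proof -
  define B where "B = (\<chi> r. if r = i then v else A $ r)"
  have "rows B \<subseteq> insert v (rows A)"
    by (auto simp: rows_def row_def B_def vec_eq_iff)
  then have "dim (rows B) \<le> dim (insert v (rows A))" by (rule dim_subset)
  also have "\<dots> \<le> dim (rows A) + 1" by (simp add: dim_insert)
  finally have "rank B < CARD('n)" using assms by (simp add: row_rank_def)
  then show ?thesis unfolding B_def[symmetric] by (simp add: det_eq_0_rank)
qed

lemma has_real_derivative_det_low_rank:
  fixes F :: "real \<Rightarrow> real^'n^'n"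
  assumes "\<And>i k. ((\<lambda>t. F t $ i $ k) has_real_derivative F' $ i $ k) (at x)"
    and "rank (F x) + 2 \<le> CARD('n)"
  shows "((\<lambda>t. det (F t)) has_real_derivative 0) (at x)"
  using has_real_derivative_det[OF assms(1)] det_replace_row_eq_0[OF assms(2)] by simp

section \<open>Sets of full local dimension\<close>

lemma set_dim_ge_card_imp_ball_subset:
  fixes S :: "(real^'m) set"
  assumes "S \<noteq> {}" "set_dim S \<ge> CARD('m)"
  obtains a r where "r > 0" "ball a r \<subseteq> S"
proof -
  define D where "D = {d. \<exists>(T::(real^'m) set) U W. subspace T \<and> dim T = d \<and> U \<noteq> {} \<and>
                        openin (top_of_set T) U \<and> W \<subseteq> S \<and> U homeomorphic W}"
  obtain x where "x \<in> S" using assms(1) by blast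
  then have "0 \<in> D" unfolding D_def
    by (intro CollectI exI[of _ "{0}"] exI[of _ "{x}"]) (auto simp: homeomorphic_finite)
  moreover have "finite D"
    by (rule finite_subset[of _ "{..CARD('m)}"]) (auto simp: D_def dim_subset_UNIV_cart)
  ultimately have "Max D \<in> D" by (auto intro: Max_in)
  then obtain T U W where TUW: "subspace (T::(real^'m) set)" "dim T = Max D" "U \<noteq> {}"
    "openin (top_of_set T) U" "W \<subseteq> S" "U homeomorphic W"
    unfolding D_def by blast
  have "Max D = set_dim S" by (simp add: set_dim_def D_def)
  with TUW(2) assms(2) have "span T = UNIV"
    using dim_subset_UNIV_cart[of T] dim_eq_full[of T] by simp
  then have "T = UNIV" using TUW(1) by (metis span_eq_iff)
  then have "open U" using TUW(4) by simp
  obtain f g where fg: "homeomorphism U W f g" using TUW(6) unfolding homeomorphic_def by blast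
  then have "open (f ` U)"
    by (intro invariance_of_domain \<open>open U\<close>) (auto simp: homeomorphism_def intro: inj_on_inverseI)
  moreover have "f ` U = W" using fg by (simp add: homeomorphism_def)
  ultimately obtain a r where "r > 0" "ball a r \<subseteq> W"
    using TUW(3) by (metis all_not_in_conv image_is_empty open_contains_ball)
  with TUW(5) that show ?thesis by blast
qed

lemma local_dim_ge_card_imp_ball_subset:
  fixes V :: "(real^'m) set"
  assumes "X \<in> V" "local_dim V X \<ge> CARD('m)"
  obtains a r where "r > 0" "ball a r \<subseteq> V"
proof -
  have "\<exists>e>0. set_dim (V \<inter> ball X e) = local_dim V X"
    unfolding local_dim_def by (rule LeastI_ex) (auto intro: exI[of _ 1])
  then obtain e where "e > 0" "set_dim (V \<inter> ball X e) \<ge> CARD('m)" using assms(2) by auto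
  moreover have "V \<inter> ball X e \<noteq> {}" using assms(1) \<open>e > 0\<close> by auto
  ultimately obtain a r where "r > 0" "ball a r \<subseteq> V \<inter> ball X e"
    by (elim set_dim_ge_card_imp_ball_subset)
  with that show ?thesis by blast
qed

section \<open>The rigidity matrix and its maximal minors\<close>

lemma rigidity_matrix_column: "(\<chi> i. rigidity_matrix l c z i j) = grad (c j) z"
  by (simp add: vec_eq_iff grad_def rigidity_matrix_def)

lemma rigidity_rank_eq_dim_grad: "rigidity_rank l c z = dim {grad (c j) z | j. j < l}"
  unfolding rigidity_rank_def rigidity_matrix_column by simp

lemma maximal_minorsE:
  assumes "p \<in> maximal_minors l c"
  obtains col :: "'m::finite \<Rightarrow> nat" where "inj col" "\<And>k. col k < l"
    "p = (\<lambda>z. det (\<chi> i k. rigidity_matrix l c z i (col k)))"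
  using assms unfolding maximal_minors_def by blast

lemma rigidity_matrix_poly_fun:
  assumes "\<forall>j<l. c j \<in> poly_fun" "j < l"
  shows "(\<lambda>z. rigidity_matrix l c z i j) \<in> poly_fun"
  unfolding rigidity_matrix_def using assms by (simp add: poly_fun_partial_deriv(1))

lemma maximal_minor_poly_fun:
  assumes "\<forall>j<l. c j \<in> poly_fun" "p \<in> maximal_minors l c"
  shows "p \<in> poly_fun"
  using assms(2)
proof (rule maximal_minorsE)
  fix col assume "\<And>k. col k < l" "p = (\<lambda>z. det (\<chi> i k. rigidity_matrix l c z i (col k)))"
  then show ?thesis by (simp add: poly_fun_det rigidity_matrix_poly_fun[OF assms(1)])
qed

lemma rigidity_rank_less_card:
  fixes X :: "real^'m"
  assumes "X \<in> shakiness_variety l c"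
  shows "rigidity_rank l c X < CARD('m)"
proof (rule ccontr)
  define S where "S = {grad (c j) X | j. j < l}"
  assume "\<not> ?thesis"
  then have "dim S = CARD('m)"
    using dim_subset_UNIV_cart[of S] by (simp add: rigidity_rank_eq_dim_grad S_def)
  then obtain B where B: "B \<subseteq> S" "independent B" "card B = CARD('m)"
    by (metis basis_exists)
  then obtain h where h: "bij_betw h (UNIV::'m set) B"
    using finite_same_card_bij[of "UNIV::'m set" B] finiteI_independent by auto
  have "\<forall>k. \<exists>j. j < l \<and> h k = grad (c j) X"
    using h B(1) unfolding S_def bij_betw_def by blast
  then obtain col where col: "\<And>k. col k < l" "\<And>k. h k = grad (c (col k)) X"
    by metis
  have "inj col"
    using col(2) h by (metis bij_betw_imp_inj_on injD injI)
  define A where "A = (\<chi> i k. rigidity_matrix l c X i (col k))"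
  have "column k A = h k" for k
    using col(2) by (simp add: A_def column_def rigidity_matrix_column)
  then have "columns A = B" using h by (auto simp: columns_def bij_betw_def)
  then have "det A \<noteq> 0"
    using B(2,3) by (simp add: det_eq_0_rank column_rank_def dim_eq_card_independent)
  moreover have "(\<lambda>z. det (\<chi> i k. rigidity_matrix l c z i (col k))) \<in> maximal_minors l c"
    unfolding maximal_minors_def using \<open>inj col\<close> col(1) by blast
  ultimately show False
    using assms by (auto simp: shakiness_variety_def A_def)
qed

lemma grad_maximal_minor_eq_0:
  fixes X :: "real^'m"
  assumes "\<forall>j<l. c j \<in> poly_fun" "rigidity_rank l c X + 2 \<le> CARD('m)"
    and "p \<in> maximal_minors l c"
  shows "grad p X = 0"
proof -
  obtain col :: "'m \<Rightarrow> nat" where col: "\<And>k. col k < l"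
    and p: "p = (\<lambda>z. det (\<chi> i k. rigidity_matrix l c z i (col k)))"
    using maximal_minorsE[OF assms(3)] by metis
  have "partial_deriv p a X = 0" for a
  proof -
    define F where "F t = (\<chi> i k. rigidity_matrix l c (X + t *\<^sub>R axis a 1) i (col k))" for t
    define F' where "F' = (\<chi> i k. partial_deriv (\<lambda>z. rigidity_matrix l c z i (col k)) a X)"
    have "column k (F 0) = grad (c (col k)) X" for k
      by (simp add: column_def F_def rigidity_matrix_column)
    then have "columns (F 0) \<subseteq> {grad (c j) X | j. j < l}"
      using col by (auto simp: columns_def)
    then have "rank (F 0) \<le> rigidity_rank l c X"
      by (simp add: column_rank_def rigidity_rank_eq_dim_grad dim_subset)
    moreover have "((\<lambda>t. F t $ i $ k) has_real_derivative F' $ i $ k) (at 0)" for i k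
      using poly_fun_partial_deriv(2)[OF rigidity_matrix_poly_fun[OF assms(1) col]]
      by (simp add: F_def F'_def)
    ultimately have "((\<lambda>t. det (F t)) has_real_derivative 0) (at 0)"
      using assms(2) by (intro has_real_derivative_det_low_rank) auto
    then show ?thesis by (simp add: partial_deriv_def p F_def DERIV_imp_deriv)
  qed
  then show ?thesis by (simp add: grad_def vec_eq_iff)
qed

lemma shakiness_variety_eq_UNIV_if_ball_subset:
  assumes "\<forall>j<l. c j \<in> poly_fun" "r > 0" "ball a r \<subseteq> shakiness_variety l c"
  shows "shakiness_variety l c = UNIV"
  using assms poly_fun_eq_0_if_eq_0_on_ball[OF maximal_minor_poly_fun[OF assms(1)] assms(2)]
  unfolding shakiness_variety_def by blast

lemma rigidity_rank_ge_at_regular_point: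
  fixes X :: "real^'m"
  assumes "\<forall>j<l. c j \<in> poly_fun" "shakiness_variety l c \<noteq> UNIV"
    and "regular_point (shakiness_variety l c) (maximal_minors l c) X"
  shows "CARD('m) - 1 \<le> rigidity_rank l c X"
proof (rule ccontr)
  assume "\<not> ?thesis"
  then have "{grad p X | p. p \<in> maximal_minors l c} \<subseteq> {0}"
    using grad_maximal_minor_eq_0[OF assms(1)] by fastforce
  then have "dim (span {grad p X | p. p \<in> maximal_minors l c}) = 0" by simp
  moreover have "dim (span {grad p X | p. p \<in> maximal_minors l c}) =
      CARD('m) - local_dim (shakiness_variety l c) X"
    using assms(3) unfolding regular_point_def by blast
  ultimately have "CARD('m) \<le> local_dim (shakiness_variety l c) X" by linarith
  moreover have "X \<in> shakiness_variety l c" using assms(3) by (simp add: regular_point_def)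
  ultimately obtain a r where "r > 0" "ball a r \<subseteq> shakiness_variety l c"
    by (metis local_dim_ge_card_imp_ball_subset)
  then show False
    using assms(1,2) shakiness_variety_eq_UNIV_if_ball_subset by blast
qed

lemma dim_orthogonal_complement:
  fixes S :: "'a::euclidean_space set"
  shows "dim {v. \<forall>x\<in>S. x \<bullet> v = 0} + dim S = DIM('a)"
proof -
  have "(\<forall>x\<in>S. x \<bullet> v = 0) \<longleftrightarrow> (\<forall>x\<in>span S. orthogonal x v)" for v
    using orthogonal_to_span[of _ S v] span_base by (auto simp: orthogonal_def inner_commute)
  then have "{v. \<forall>x\<in>S. x \<bullet> v = 0} = {v \<in> UNIV. \<forall>x\<in>span S. orthogonal x v}"
    by blast
  then show ?thesis
    using dim_subspace_orthogonal_to_vectors[of "span S" UNIV] by simp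
qed

lemma dim_infinitesimal_flexes:
  fixes X :: "real^'m"
  shows "dim {v. \<forall>j<l. grad (c j) X \<bullet> v = 0} + rigidity_rank l c X = CARD('m)"
proof -
  have "{v. \<forall>j<l. grad (c j) X \<bullet> v = 0} = {v. \<forall>x\<in>{grad (c j) X | j. j < l}. x \<bullet> v = 0}"
    by blast
  then show ?thesis
    using dim_orthogonal_complement[of "{grad (c j) X | j. j < l}"]
    by (simp add: rigidity_rank_eq_dim_grad)
qed

theorem lemma1:
  fixes l :: nat and c :: "nat \<Rightarrow> real^'m \<Rightarrow> real" and X :: "real^'m"
  assumes "\<forall>j<l. c j \<in> poly_fun"
    and "l \<ge> CARD('m)"
    and "shakiness_variety l c \<noteq> UNIV"
    and "regular_point (shakiness_variety l c) (maximal_minors l c) X"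
  shows "rigidity_rank l c X = CARD('m) - 1 \<and>
         dim {v. \<forall>j<l. grad (c j) X \<bullet> v = 0} = 1"
proof -
  have "rigidity_rank l c X < CARD('m)"
    using assms(4) by (intro rigidity_rank_less_card) (simp add: regular_point_def)
  moreover have "CARD('m) - 1 \<le> rigidity_rank l c X"
    using assms(1,3,4) by (rule rigidity_rank_ge_at_regular_point)
  ultimately have "rigidity_rank l c X = CARD('m) - 1" by linarith
  moreover have "dim {v. \<forall>j<l. grad (c j) X \<bullet> v = 0} + rigidity_rank l c X = CARD('m)"
    by (rule dim_infinitesimal_flexes)
  moreover have "CARD('m) > 0" by (simp add: card_gt_0_iff)
  ultimately show ?thesis by arith
qed

end
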